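(* Let $a<b$ be coprime positive integers with $\alpha=\sqrt{b/a}\notin\mathbb{Q}$. Let $\Gamma\subset\mathbb{Z}^2$ be a full-rank lattice with basis $\mathbf e_1=(\lambda_1,\mu_1)$, $\mathbf e_2=(\lambda_2,\mu_2)$ satisfying $\|\mathbf e_1\|\le2\nu_2$ and $\|\mathbf e_2\|\le2\nu_1$, and let $\theta=-\frac{\lambda_1-\alpha\mu_1}{\lambda_2-\alpha\mu_2}$. Then for all positive integers $u,v$, $$\Big|\frac uv-\alpha\Big|\ge\frac{\Xi(\alpha)}{v^2}\quad\text{and}\quad\Big|\frac uv-\theta\Big|\ge\frac{\xi(\theta)}{v^2},\qquad\text{where } \Xi(\alpha)=(4\sqrt{ab})^{-1},\ \xi(\theta)=(162\,b\det\Gamma)^{-1}.$$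
   Context: $\|(x,y)\|=\max(|x|,|y|)$, and $\nu_1\le\nu_2$ are the successive minima of $\Gamma$ with respect to this norm. *)

theory Defs
  imports Complex_Main
begin

definition lattice_of :: "int \<times> int \<Rightarrow> int \<times> int \<Rightarrow> (int \<times> int) set" where
  "lattice_of e1 e2 =
     {(m * fst e1 + n * fst e2, m * snd e1 + n * snd e2) | m n. True}"

definition det2 :: "int \<times> int \<Rightarrow> int \<times> int \<Rightarrow> int" where
  "det2 x y = fst x * snd y - snd x * fst y"

definition supnorm :: "int \<times> int \<Rightarrow> real" where
  "supnorm x = real_of_int (max \<bar>fst x\<bar> \<bar>snd x\<bar>)"

definition succ_min1 :: "(int \<times> int) set \<Rightarrow> real" where
  "succ_min1 L = Inf {r. \<exists>x\<in>L. x \<noteq> (0,0) \<and> supnorm x \<le> r}"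

definition succ_min2 :: "(int \<times> int) set \<Rightarrow> real" where
  "succ_min2 L = Inf {r. \<exists>x\<in>L. \<exists>y\<in>L. det2 x y \<noteq> 0 \<and> supnorm x \<le> r \<and> supnorm y \<le> r}"

definition lattice_det :: "int \<times> int \<Rightarrow> int \<times> int \<Rightarrow> real" where
  "lattice_det e1 e2 = real_of_int \<bar>det2 e1 e2\<bar>"

end

theory Submission
  imports Defs
begin

(* Both bounds come from the norm form a p^2 - b q^2 = a (p - \<alpha> q) (p + \<alpha> q), a nonzero
   integer for (p, q) \<noteq> (0, 0) because \<alpha> is irrational. For \<alpha> itself this gives
   |u - v \<alpha>| \<ge> 1 / (a (u + v \<alpha>)) at once. For \<theta>, put E = \<lambda>2 - \<alpha> \<mu>2, F = \<lambda>2 + \<alpha> \<mu>2 and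
   let X = p - \<alpha> q, Y = p + \<alpha> q for the lattice point (p, q) = u e2 + v e1, so that
   v E (u/v - \<theta>) = X and a X Y is the norm form at (p, q). The determinant E Y - F X equals
   -2 \<alpha> v det \<Gamma>, independently of u; together with |E|, |F| \<le> 4 \<alpha> det \<Gamma>, which follows from
   \<parallel>e2\<parallel> \<le> 2 \<nu>1 \<le> 2 det \<Gamma>, this forces |X| \<ge> |E| / (162 b v det \<Gamma>). *)

lemma one_le_norm_form:
  fixes \<alpha> :: real and a b :: nat and p q :: int
  assumes "0 < a" "\<alpha> \<notin> \<rat>" "real a * \<alpha>\<^sup>2 = real b" "(p, q) \<noteq> (0, 0)"
  shows "1 \<le> real a * \<bar>p - \<alpha> * q\<bar> * \<bar>p + \<alpha> * q\<bar>"
proof -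
  have factor: "real a * (p - \<alpha> * q) * (p + \<alpha> * q) = of_int (int a * p\<^sup>2 - int b * q\<^sup>2)"
    using assms(3) by (simp add: power2_eq_square algebra_simps)
  have "int a * p\<^sup>2 \<noteq> int b * q\<^sup>2"
  proof
    assume eq: "int a * p\<^sup>2 = int b * q\<^sup>2"
    show False
    proof (cases "q = 0")
      case True
      then show False using eq assms(1,4) by simp
    next
      case False
      have "real a * (of_int p)\<^sup>2 = real b * (of_int q)\<^sup>2"
        using arg_cong[OF eq, of real_of_int] by simp
      then have "real a * (\<alpha> * q)\<^sup>2 = real a * (of_int p)\<^sup>2"
        using assms(3) by (simp add: power_mult_distrib mult.assoc)
      then have "(\<alpha> * q)\<^sup>2 = (of_int p)\<^sup>2" using assms(1) by simp
      then have "\<alpha> * q = p \<or> \<alpha> * q = - p" by (simp add: power2_eq_iff)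
      then have "\<alpha> = of_int p / of_int q \<or> \<alpha> = - of_int p / of_int q"
        using False by (auto simp: field_simps)
      then show False using assms(2) by auto
    qed
  qed
  then have "1 \<le> \<bar>int a * p\<^sup>2 - int b * q\<^sup>2\<bar>" by linarith
  then have "1 \<le> \<bar>real a * (p - \<alpha> * q) * (p + \<alpha> * q)\<bar>"
    unfolding factor by (metis of_int_1_le_iff of_int_abs)
  then show ?thesis by (simp add: abs_mult)
qed

lemma approximation_lower_bound:
  fixes \<alpha> :: real and a b :: nat and u v :: int
  assumes "0 < a" "\<alpha> \<notin> \<rat>" "real a * \<alpha>\<^sup>2 = real b" "0 < \<alpha>" "0 < u" "0 < v"
  shows "1 / (4 * real a * \<alpha>) / (of_int v)\<^sup>2 \<le> \<bar>of_int u / of_int v - \<alpha>\<bar>"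
proof -
  define W where "W = \<bar>of_int u - \<alpha> * of_int v\<bar>"
  have v1: "1 \<le> real_of_int v" using assms(6) by simp
  have a\<alpha>: "0 < real a * \<alpha>" using assms(1,4) by simp
  have "1 / (4 * real a * \<alpha>) \<le> W * of_int v"
  proof (cases "of_int u \<le> 3 * \<alpha> * of_int v")
    case True
    have "1 \<le> real a * W * (of_int u + \<alpha> * of_int v)"
      using one_le_norm_form[OF assms(1-3), of u v] assms(4-6) unfolding W_def by simp
    also have "\<dots> \<le> real a * W * (4 * \<alpha> * of_int v)"
      using True unfolding W_def by (intro mult_left_mono) auto
    finally show ?thesis using a\<alpha> by (simp add: divide_le_eq algebra_simps)
  next
    case False
    have "\<alpha> \<le> \<alpha> * of_int v" using v1 assms(4) by simp
    then have "2 * \<alpha> \<le> W" using False unfolding W_def by linarith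
    moreover have "1 / (4 * real a * \<alpha>) \<le> 2 * \<alpha>"
    proof -
      have "0 < real b" unfolding assms(3)[symmetric] using assms(1,4) by simp
      then have "1 \<le> real a * \<alpha>\<^sup>2 * 8" using assms(3) by simp
      then show ?thesis using a\<alpha> by (simp add: divide_le_eq power2_eq_square algebra_simps)
    qed
    moreover have "W * 1 \<le> W * of_int v" using v1 unfolding W_def by (intro mult_left_mono) auto
    ultimately show ?thesis by linarith
  qed
  moreover have "\<bar>of_int u / of_int v - \<alpha>\<bar> = W * of_int v / (of_int v)\<^sup>2"
    unfolding W_def using v1 by (simp add: field_simps abs_div power2_eq_square)
  ultimately show ?thesis by (metis divide_right_mono zero_le_power2)
qed

lemma succ_min1_le_abs_det2:
  assumes "det2 e1 e2 \<noteq> 0"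
  shows "succ_min1 (lattice_of e1 e2) \<le> \<bar>det2 e1 e2\<bar>"
proof -
  have "(det2 e1 e2, 0) \<in> lattice_of e1 e2"
    unfolding lattice_of_def det2_def
    by (rule CollectI, rule exI[of _ "snd e2"], rule exI[of _ "- snd e1"]) (simp add: algebra_simps)
  then have "of_int \<bar>det2 e1 e2\<bar> \<in> {r. \<exists>x\<in>lattice_of e1 e2. x \<noteq> (0, 0) \<and> supnorm x \<le> r}"
    using assms unfolding supnorm_def by force
  moreover have "bdd_below {r. \<exists>x\<in>lattice_of e1 e2. x \<noteq> (0, 0) \<and> supnorm x \<le> r}"
    unfolding bdd_below_def supnorm_def by (rule exI[of _ 0]) force
  ultimately show ?thesis unfolding succ_min1_def by (rule cInf_lower)
qed

lemma le_mult_of_le_quadratic: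
  fixes A c d e K :: real
  assumes "e \<le> c * A + d * A\<^sup>2" "0 \<le> A" "0 \<le> d" "0 < K" "c + d * e / K \<le> K"
  shows "e \<le> K * A"
proof (rule ccontr)
  assume "\<not> e \<le> K * A"
  then have "A \<le> e / K" using assms(4) by (simp add: field_simps)
  then have "d * (A * A) \<le> d * (e / K * A)"
    using assms(2,3) by (intro mult_left_mono mult_right_mono)
  then have "d * A\<^sup>2 \<le> d * e / K * A" by (simp add: power2_eq_square)
  then have "e \<le> (c + d * e / K) * A" using assms(1) by (simp add: algebra_simps)
  also have "\<dots> \<le> K * A" using assms(2,5) by (rule mult_right_mono[rotated])
  finally show False using \<open>\<not> e \<le> K * A\<close> by simp
qed

lemma abs_add_mult_le:
  fixes l m \<alpha> N :: real
  assumes "\<bar>l\<bar> \<le> N" "\<bar>m\<bar> \<le> N" "1 \<le> \<alpha>"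
  shows "\<bar>l + \<alpha> * m\<bar> \<le> 2 * \<alpha> * N"
proof -
  have "\<alpha> * \<bar>m\<bar> \<le> \<alpha> * N" using assms(2,3) by (intro mult_left_mono) auto
  moreover have "1 * N \<le> \<alpha> * N" using assms by (intro mult_right_mono) auto
  moreover have "\<bar>l + \<alpha> * m\<bar> \<le> \<bar>l\<bar> + \<alpha> * \<bar>m\<bar>"
    using assms(3) abs_triangle_ineq[of l "\<alpha> * m"] by (simp add: abs_mult)
  ultimately show ?thesis using assms(1) by linarith
qed

lemma le_of_conjugate_forms:
  fixes a b \<alpha> D v e f A B :: real
  assumes "1 \<le> a" "a * \<alpha>\<^sup>2 = b" "1 \<le> \<alpha>" "1 \<le> D" "1 \<le> v"
    and "0 \<le> A" "0 \<le> B" "0 \<le> e" "0 \<le> f" "1 \<le> a * A * B"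
    and "e * B \<le> f * A + 2 * \<alpha> * D * v" "e \<le> 4 * \<alpha> * D" "f \<le> 4 * \<alpha> * D"
  shows "e \<le> (162 * b * D * v) * A"
proof -
  have "1 * (1 * 1) \<le> a * (\<alpha> * \<alpha>)" using assms(1,3) by (intro mult_mono) auto
  then have b1: "1 \<le> b" using assms(2) by (simp add: power2_eq_square)
  have "e * 1 \<le> e * (a * A * B)" using assms(8,10) by (intro mult_left_mono)
  also have "\<dots> = (a * A) * (e * B)" by (simp add: mult_ac)
  also have "\<dots> \<le> (a * A) * (f * A + 2 * \<alpha> * D * v)"
    using assms(1,6,11) by (intro mult_left_mono) auto
  also have "\<dots> = (2 * \<alpha> * D * v * a) * A + (a * f) * A\<^sup>2" by (simp add: power2_eq_square algebra_simps)
  finally have quad: "e \<le> (2 * \<alpha> * D * v * a) * A + (a * f) * A\<^sup>2" by simp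
  show ?thesis
  proof (rule le_mult_of_le_quadratic[OF quad])
    have "1 * (\<alpha> * a) \<le> \<alpha> * (\<alpha> * a)" using assms(1,3) by (intro mult_right_mono) auto
    then have "\<alpha> * a \<le> b" using assms(2) by (simp add: power2_eq_square mult_ac)
    then have "2 * \<alpha> * D * v * a \<le> 2 * b * D * v" using assms(4,5) by (simp add: mult_right_mono algebra_simps)
    moreover have "a * f * e / (162 * b * D * v) \<le> 160 * b * D * v"
    proof -
      have "a * f * e \<le> a * (4 * \<alpha> * D) * (4 * \<alpha> * D)"
        using assms by (intro mult_mono) auto
      also have "\<dots> = 16 * b * D * D" using assms(2) by (simp add: power2_eq_square algebra_simps)
      also have "\<dots> \<le> (16 * b * D * D) * (1620 * (b * (v * v)))"
      proof -
        have "1 * 1 \<le> v * v" using assms(5) by (intro mult_mono) auto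
        then have "1 * 1 \<le> b * (v * v)" using b1 by (intro mult_mono) auto
        then have "1 \<le> 1620 * (b * (v * v))" by linarith
        then show ?thesis using b1 assms(4) by (simp add: mult_le_cancel_left1 mult_ac)
      qed
      also have "\<dots> = (160 * b * D * v) * (162 * b * D * v)" by (simp add: algebra_simps)
      finally show ?thesis using b1 assms(4,5) by (simp add: divide_le_eq)
    qed
    ultimately show "2 * \<alpha> * D * v * a + a * f * e / (162 * b * D * v) \<le> 162 * b * D * v"
      by linarith
  qed (use assms b1 in auto)
qed

lemma theta_numerator_lower_bound:
  fixes \<alpha> :: real and a b :: nat and l1 m1 l2 m2 u v :: int
  assumes "0 < a" "\<alpha> \<notin> \<rat>" "real a * \<alpha>\<^sup>2 = real b" "1 < \<alpha>" "0 < v"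
    and "det2 (l1, m1) (l2, m2) \<noteq> 0"
    and "supnorm (l2, m2) \<le> 2 * \<bar>det2 (l1, m1) (l2, m2)\<bar>"
  defines "D \<equiv> real_of_int \<bar>det2 (l1, m1) (l2, m2)\<bar>"
  shows "\<bar>l2 - \<alpha> * m2\<bar> \<le> 162 * real b * D * v * \<bar>u * (l2 - \<alpha> * m2) + v * (l1 - \<alpha> * m1)\<bar>"
proof -
  define E F where "E = l2 - \<alpha> * m2" and "F = l2 + \<alpha> * m2"
  define p q where "p = u * l2 + v * l1" and "q = u * m2 + v * m1"
  define X Y where "X = p - \<alpha> * q" and "Y = p + \<alpha> * q"
  have D1: "1 \<le> D" using assms(6) unfolding D_def by linarith
  have v1: "1 \<le> real_of_int v" using assms(5) by simp
  have l2_le: "\<bar>real_of_int l2\<bar> \<le> 2 * D" and m2_le: "\<bar>real_of_int m2\<bar> \<le> 2 * D"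
    using assms(7) unfolding D_def supnorm_def by auto
  have E_le: "\<bar>E\<bar> \<le> 4 * \<alpha> * D"
    using abs_add_mult_le[of l2 "2 * D" "- m2" \<alpha>] l2_le m2_le assms(4) unfolding E_def by simp
  have F_le: "\<bar>F\<bar> \<le> 4 * \<alpha> * D"
    using abs_add_mult_le[of l2 "2 * D" m2 \<alpha>] l2_le m2_le assms(4) unfolding F_def by simp
  have "(p, q) \<noteq> (0, 0)"
  proof
    assume "(p, q) = (0, 0)"
    moreover have "v * det2 (l1, m1) (l2, m2) = p * m2 - q * l2"
      unfolding p_def q_def det2_def by (simp add: algebra_simps)
    ultimately show False using assms(5,6) by simp
  qed
  then have norm: "1 \<le> real a * \<bar>X\<bar> * \<bar>Y\<bar>"
    using one_le_norm_form[OF assms(1-3)] unfolding X_def Y_def by blast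
  have "E * Y = F * X + (- 2 * \<alpha> * v * det2 (l1, m1) (l2, m2))"
    unfolding E_def F_def X_def Y_def p_def q_def det2_def by (simp add: algebra_simps)
  then have "\<bar>E * Y\<bar> \<le> \<bar>F * X\<bar> + \<bar>- 2 * \<alpha> * v * det2 (l1, m1) (l2, m2)\<bar>"
    by (simp only: abs_triangle_ineq)
  then have "\<bar>E\<bar> * \<bar>Y\<bar> \<le> \<bar>F\<bar> * \<bar>X\<bar> + 2 * \<alpha> * D * v"
    using assms(4,5) unfolding D_def by (simp add: abs_mult mult_ac)
  then have "\<bar>E\<bar> \<le> (162 * real b * D * v) * \<bar>X\<bar>"
    using le_of_conjugate_forms[OF _ assms(3) _ D1 v1 abs_ge_zero abs_ge_zero abs_ge_zero abs_ge_zero norm]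
      E_le F_le assms(1,4) by simp
  moreover have "X = u * E + v * (l1 - \<alpha> * m1)" unfolding X_def E_def p_def q_def by (simp add: algebra_simps)
  ultimately show ?thesis unfolding E_def by simp
qed

lemma theta_approximation_lower_bound:
  fixes \<alpha> :: real and a b :: nat and l1 m1 l2 m2 u v :: int
  assumes "0 < a" "\<alpha> \<notin> \<rat>" "real a * \<alpha>\<^sup>2 = real b" "1 < \<alpha>" "0 < v"
    and "det2 (l1, m1) (l2, m2) \<noteq> 0"
    and "supnorm (l2, m2) \<le> 2 * succ_min1 (lattice_of (l1, m1) (l2, m2))"
  shows "1 / (162 * real b * lattice_det (l1, m1) (l2, m2)) / (of_int v)\<^sup>2
    \<le> \<bar>of_int u / of_int v - - (l1 - \<alpha> * m1) / (l2 - \<alpha> * m2)\<bar>"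
proof -
  define D where "D = lattice_det (l1, m1) (l2, m2)"
  define E X where "E = l2 - \<alpha> * m2" and "X = u * (l2 - \<alpha> * m2) + v * (l1 - \<alpha> * m1)"
  define K where "K = 162 * real b * D * v"
  have "supnorm (l2, m2) \<le> 2 * \<bar>det2 (l1, m1) (l2, m2)\<bar>"
    using assms(7) succ_min1_le_abs_det2[OF assms(6)] by linarith
  then have E_le: "\<bar>E\<bar> \<le> K * \<bar>X\<bar>"
    using theta_numerator_lower_bound[OF assms(1-6)] unfolding E_def X_def K_def D_def lattice_det_def
    by (simp add: mult_ac)
  have "(l2, m2) \<noteq> (0, 0)" using assms(6) unfolding det2_def by auto
  then have "1 \<le> real a * \<bar>E\<bar> * \<bar>l2 + \<alpha> * m2\<bar>"
    using one_le_norm_form[OF assms(1-3)] unfolding E_def by blast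
  then have E_pos: "0 < \<bar>E\<bar>" by (cases "E = 0") auto
  have v1: "1 \<le> real_of_int v" using assms(5) by simp
  have "0 < real b" unfolding assms(3)[symmetric] using assms(1,4) by simp
  moreover have "1 \<le> D" using assms(6) unfolding D_def lattice_det_def by linarith
  ultimately have K_pos: "0 < K" unfolding K_def using v1 by simp
  have "1 / (162 * real b * D) / (of_int v)\<^sup>2 = \<bar>E\<bar> / (K * (of_int v * \<bar>E\<bar>))"
    using E_pos v1 unfolding K_def by (simp add: field_simps power2_eq_square)
  also have "\<dots> \<le> K * \<bar>X\<bar> / (K * (of_int v * \<bar>E\<bar>))"
    using E_le E_pos K_pos v1 by (intro divide_right_mono) auto
  also have "\<dots> = \<bar>X / (of_int v * E)\<bar>"
    using K_pos v1 by (simp add: abs_div abs_mult)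
  also have "X / (of_int v * E) = of_int u / of_int v - - (l1 - \<alpha> * m1) / (l2 - \<alpha> * m2)"
    using E_pos v1 unfolding E_def X_def by (simp add: field_simps)
  finally show ?thesis unfolding D_def .
qed

theorem mainTheorem14:
  fixes a b :: nat and l1 m1 l2 m2 :: int
  assumes "0 < a" "a < b" "coprime a b"
    and "sqrt (real b / real a) \<notin> \<rat>"
    and "det2 (l1, m1) (l2, m2) \<noteq> 0"
    and "supnorm (l1, m1) \<le> 2 * succ_min2 (lattice_of (l1, m1) (l2, m2))"
    and "supnorm (l2, m2) \<le> 2 * succ_min1 (lattice_of (l1, m1) (l2, m2))"
  shows "\<forall>u v :: int. 0 < u \<longrightarrow> 0 < v \<longrightarrow>
      (let \<alpha> = sqrt (real b / real a);
           \<theta> = - (real_of_int l1 - \<alpha> * real_of_int m1) / (real_of_int l2 - \<alpha> * real_of_int m2)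
       in \<bar>real_of_int u / real_of_int v - \<alpha>\<bar> \<ge> (1 / (4 * sqrt (real a * real b))) / (real_of_int v)\<^sup>2
        \<and> \<bar>real_of_int u / real_of_int v - \<theta>\<bar> \<ge>
            (1 / (162 * real b * lattice_det (l1, m1) (l2, m2))) / (real_of_int v)\<^sup>2)"
proof -
  define \<alpha> where "\<alpha> = sqrt (real b / real a)"
  have irrational: "\<alpha> \<notin> \<rat>" using assms(4) unfolding \<alpha>_def .
  have "1 < \<alpha>" unfolding \<alpha>_def using assms(1,2) by simp
  have sq: "real a * \<alpha>\<^sup>2 = real b" unfolding \<alpha>_def using assms(1) by simp
  have "real a * \<alpha> = sqrt (real a * real b)"
    using assms(1) unfolding \<alpha>_def by (simp add: real_sqrt_mult real_sqrt_divide field_simps)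
  then show ?thesis
    unfolding Let_def \<alpha>_def[symmetric]
    using approximation_lower_bound[OF assms(1) irrational sq] theta_approximation_lower_bound[OF assms(1) irrational sq \<open>1 < \<alpha>\<close> _ assms(5,7)] \<open>1 < \<alpha>\<close>
    by (simp add: mult.assoc)
qed

end
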